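(* Let $f$ be a piecewise contracting interval map satisfying the separation property, let $x\in\widetilde X$ and let $\theta$ be its itinerary. Then there exist $m_0\geqslant 1$ and a number $\beta(x)$ such that \[ p(\theta,n)=n\,\#\Delta_{lr}(x)+\beta(x)\qquad\forall\, n\geqslant m_0, \] and \[ p(\theta,1)-\#\Delta_{lr}(x)\leqslant\beta(x)\leqslant p(\theta,1)-\#\Delta+m_0\big(\#\Delta-\#\Delta_{lr}(x)\big). \]
   Context: Let $X$ be a compact interval of $\mathbb{R}$ and $X_1<X_2<\dots<X_N$ ($N\geqslant 2$) be non-empty pairwise disjoint intervals, open in $X$, with $X=\bigcup_{i}\overline{X_i}$. Let $\Delta:=\{x\in\overline{X_i}\cap\overline{X_j}: i\neq j\}$; so $\Delta=\{c_1,\dots,c_{N-1}\}$ with $\{c_i\}=\overline{X_i}\cap\overline{X_{i+1}}$. A piecewise contracting interval map is a map $f:X\to X$ discontinuous at every point of $\Delta$ for which there is $\lambda\in(0,1)$ with $|f(x)-f(y)|\leqslant\lambda|x-y|$ whenever $x,y$ lie in the same $X_i$; let $f_i:\overline{X_i}\to X$ be the continuous extension of $f|_{X_i}$. Separation property: each $f_i$ is injective and $f_i(\overline{X_i})\cap f_j(\overline{X_j})=\emptyset$ for $i\neq j$. $\widetilde X:=\bigcap_{n\geqslant 0}f^{-n}(X\setminus\Delta)$ (assumed non-empty); the itinerary of $x\in\widetilde X$ is $\theta\in\{1,\dots,N\}^{\mathbb{N}}$ with $\theta_t=i$ iff $f^t(x)\in X_i$. $L_n(\theta):=\{\theta_t\dots\theta_{t+n-1}:t\geqslant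 0\}$, $p(\theta,n):=\#L_n(\theta)$. Atoms: for $A\subset X$ let $F_i(A):=\overline{f(A\cap X_i)}$; for $(i_1,\dots,i_n)\in\{1,\dots,N\}^n$ the set $A_{i_1\dots i_n}:=F_{i_n}\circ\dots\circ F_{i_1}(X)$ is an atom of generation $n$ if it is non-empty; $\mathcal{A}_n$ is the set of atoms of generation $n$, and for $x\in X$, $\mathcal{A}_n(x):=\{A\in\mathcal{A}_n:\exists t\in\mathbb{N},\ f^{t+n}(x)\in A\}$. For $c=c_i\in\Delta$ and $n\geqslant 1$, $c$ is $n$-left-right visited by the orbit of $x$ if there exists $A\in\mathcal{A}_n(x)$ with $c\in A$, such that $f^{t+n}(x)\in A\cap X_i$ for some $t\in\mathbb{N}$ and $f^{t'+n}(x)\in A\cap X_{i+1}$ for some $t'\in\mathbb{N}$. $\Delta^n_{lr}(x)$ is the set of such discontinuities, and $\Delta_{lr}(x):=\bigcap_{n\geqslant1}\Delta^n_{lr}(x)$ (the discontinuities that are left-right recurrently visited). *)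

theory Defs
  imports "HOL-Analysis.Analysis"
begin

definition pc_interval_map ::
  "real set \<Rightarrow> nat \<Rightarrow> (nat \<Rightarrow> real set) \<Rightarrow> (real \<Rightarrow> real) \<Rightarrow> (nat \<Rightarrow> real \<Rightarrow> real) \<Rightarrow> bool" where
  "pc_interval_map X N Xs f fe \<longleftrightarrow>
     compact X \<and> is_interval X \<and> N \<ge> 2 \<and>
     (\<forall>i\<in>{1..N}. Xs i \<noteq> {} \<and> is_interval (Xs i) \<and> openin (top_of_set X) (Xs i)) \<and>
     (\<forall>i\<in>{1..N}. \<forall>j\<in>{1..N}. i \<noteq> j \<longrightarrow> Xs i \<inter> Xs j = {}) \<and>
     (\<forall>i\<in>{1..N}. \<forall>j\<in>{1..N}. i < j \<longrightarrow> (\<forall>x\<in>Xs i. \<forall>y\<in>Xs j. x < y)) \<and>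
     X = (\<Union>i\<in>{1..N}. closure (Xs i)) \<and>
     f ` X \<subseteq> X \<and>
     (\<exists>lam::real. 0 < lam \<and> lam < 1 \<and>
        (\<forall>i\<in>{1..N}. \<forall>x\<in>Xs i. \<forall>y\<in>Xs i. \<bar>f x - f y\<bar> \<le> lam * \<bar>x - y\<bar>)) \<and>
     (\<forall>i\<in>{1..N}. continuous_on (closure (Xs i)) (fe i) \<and> (\<forall>x\<in>Xs i. fe i x = f x))"

definition disc_set :: "nat \<Rightarrow> (nat \<Rightarrow> real set) \<Rightarrow> real set" where
  "disc_set N Xs = {x. \<exists>i\<in>{1..N}. \<exists>j\<in>{1..N}. i \<noteq> j \<and> x \<in> closure (Xs i) \<inter> closure (Xs j)}"

definition pc_discontinuous :: "real set \<Rightarrow> nat \<Rightarrow> (nat \<Rightarrow> real set) \<Rightarrow> (real \<Rightarrow> real) \<Rightarrow> bool" where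
  "pc_discontinuous X N Xs f \<longleftrightarrow> (\<forall>c\<in>disc_set N Xs. \<not> continuous (at c within X) f)"

definition separation_property :: "nat \<Rightarrow> (nat \<Rightarrow> real set) \<Rightarrow> (nat \<Rightarrow> real \<Rightarrow> real) \<Rightarrow> bool" where
  "separation_property N Xs fe \<longleftrightarrow>
     (\<forall>i\<in>{1..N}. inj_on (fe i) (closure (Xs i))) \<and>
     (\<forall>i\<in>{1..N}. \<forall>j\<in>{1..N}. i \<noteq> j \<longrightarrow>
        fe i ` closure (Xs i) \<inter> fe j ` closure (Xs j) = {})"

definition Xtilde :: "real set \<Rightarrow> nat \<Rightarrow> (nat \<Rightarrow> real set) \<Rightarrow> (real \<Rightarrow> real) \<Rightarrow> real set" where
  "Xtilde X N Xs f = (\<Inter>n. {x\<in>X. (f ^^ n) x \<in> X - disc_set N Xs})"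

definition is_itinerary :: "nat \<Rightarrow> (nat \<Rightarrow> real set) \<Rightarrow> (real \<Rightarrow> real) \<Rightarrow> real \<Rightarrow> (nat \<Rightarrow> nat) \<Rightarrow> bool" where
  "is_itinerary N Xs f x \<theta> \<longleftrightarrow>
     (\<forall>t. \<theta> t \<in> {1..N} \<and> (\<forall>i\<in>{1..N}. \<theta> t = i \<longleftrightarrow> (f ^^ t) x \<in> Xs i))"

definition lang :: "(nat \<Rightarrow> nat) \<Rightarrow> nat \<Rightarrow> nat list set" where
  "lang \<theta> n = {map (\<lambda>k. \<theta> (t + k)) [0..<n] | t. True}"

definition complexity :: "(nat \<Rightarrow> nat) \<Rightarrow> nat \<Rightarrow> nat" where
  "complexity \<theta> n = card (lang \<theta> n)"

definition Fmap :: "(nat \<Rightarrow> real set) \<Rightarrow> (real \<Rightarrow> real) \<Rightarrow> nat \<Rightarrow> real set \<Rightarrow> real set" where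
  "Fmap Xs f i A = closure (f ` (A \<inter> Xs i))"

definition atom :: "real set \<Rightarrow> (nat \<Rightarrow> real set) \<Rightarrow> (real \<Rightarrow> real) \<Rightarrow> nat list \<Rightarrow> real set" where
  "atom X Xs f w = foldl (\<lambda>A i. Fmap Xs f i A) X w"

definition atoms :: "real set \<Rightarrow> nat \<Rightarrow> (nat \<Rightarrow> real set) \<Rightarrow> (real \<Rightarrow> real) \<Rightarrow> nat \<Rightarrow> real set set" where
  "atoms X N Xs f n = {atom X Xs f w | w. length w = n \<and> set w \<subseteq> {1..N} \<and> atom X Xs f w \<noteq> {}}"

definition atoms_of :: "real set \<Rightarrow> nat \<Rightarrow> (nat \<Rightarrow> real set) \<Rightarrow> (real \<Rightarrow> real) \<Rightarrow> nat \<Rightarrow> real \<Rightarrow> real set set" where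
  "atoms_of X N Xs f n x = {A \<in> atoms X N Xs f n. \<exists>t. (f ^^ (t + n)) x \<in> A}"

definition Delta_lr_n :: "real set \<Rightarrow> nat \<Rightarrow> (nat \<Rightarrow> real set) \<Rightarrow> (real \<Rightarrow> real) \<Rightarrow> nat \<Rightarrow> real \<Rightarrow> real set" where
  "Delta_lr_n X N Xs f n x = {c \<in> disc_set N Xs. \<exists>i. 1 \<le> i \<and> i < N \<and>
      c \<in> closure (Xs i) \<inter> closure (Xs (Suc i)) \<and>
      (\<exists>A\<in>atoms_of X N Xs f n x. c \<in> A \<and>
         (\<exists>t. (f ^^ (t + n)) x \<in> A \<inter> Xs i) \<and>
         (\<exists>t'. (f ^^ (t' + n)) x \<in> A \<inter> Xs (Suc i)))}"

definition Delta_lr :: "real set \<Rightarrow> nat \<Rightarrow> (nat \<Rightarrow> real set) \<Rightarrow> (real \<Rightarrow> real) \<Rightarrow> real \<Rightarrow> real set" where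
  "Delta_lr X N Xs f x = (\<Inter>n\<in>{1..}. Delta_lr_n X N Xs f n x)"

end

theory Submission
  imports Defs
begin

text \<open>
  Atoms of generation n are closed intervals of length at most \<lambda>^n |X|, atoms coded by distinct
  words of length n are disjoint by the separation property, and f^(t+n)(x) lies in the atom coded
  by the factor of \<theta> of length n at position t. Hence p(\<theta>,n+1) - p(\<theta>,n) is the number of right
  extensions of the factors of length n, each counted but the largest one. Two extensions i < i' of
  a factor u put the cut c_i into the atom of u, so this increment is at most #\<Delta>; it is at least
  #\<Delta>^n_lr(x), with equality once atoms are shorter than every piece, since then extensions of a
  factor are consecutive. The sets \<Delta>^n_lr(x) decrease to \<Delta>_lr(x) and stabilise, and summing the
  increments gives the affine formula together with the bounds on \<beta>.
\<close>

lemma decreasing_finite_sets_stabilize: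
  fixes A :: "nat \<Rightarrow> 'a set"
  assumes decreasing: "\<And>m n. k \<le> m \<Longrightarrow> m \<le> n \<Longrightarrow> A n \<subseteq> A m" and "finite (A k)"
  shows "\<exists>m\<ge>k. \<forall>n\<ge>m. A n = (\<Inter>i\<in>{k..}. A i)"
proof -
  obtain m where m: "k \<le> m" and least: "\<And>n. k \<le> n \<Longrightarrow> card (A m) \<le> card (A n)"
    using ex_has_least_nat[of "\<lambda>n. k \<le> n" k "\<lambda>n. card (A n)"] by auto
  have "finite (A m)"
    using decreasing[OF order_refl m] \<open>finite (A k)\<close> finite_subset by blast
  then have stable: "A n = A m" if "m \<le> n" for n
    using card_seteq[of "A m" "A n"] decreasing[OF m that] least[of n] m that by simp
  have "A m \<subseteq> A i" if "k \<le> i" for i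
    using decreasing[OF that, of m] stable[of i] by (cases "i \<le> m") auto
  then have "A m = (\<Inter>i\<in>{k..}. A i)" using m by blast
  with stable show ?thesis using m by metis
qed

lemma eventually_affine_of_bounded_increments:
  fixes p s :: "nat \<Rightarrow> int" and d K :: int
  assumes increment: "\<And>n. p (Suc n) = p n + s n"
    and lower: "\<And>n. 1 \<le> n \<Longrightarrow> d \<le> s n" and upper: "\<And>n. 1 \<le> n \<Longrightarrow> s n \<le> K"
    and stable: "\<And>n. m \<le> n \<Longrightarrow> s n = d" and "1 \<le> m"
  shows "\<exists>\<beta>. (\<forall>n\<ge>m. p n = int n * d + \<beta>) \<and> p 1 - d \<le> \<beta> \<and> \<beta> \<le> p 1 - K + int m * (K - d)"
proof -
  define \<beta> where "\<beta> = p m - int m * d"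
  have "p n = p m + (int n - int m) * d" if "m \<le> n" for n
    using that by (induction n rule: dec_induct) (auto simp: increment stable algebra_simps)
  then have "\<forall>n\<ge>m. p n = int n * d + \<beta>"
    by (simp add: \<beta>_def algebra_simps)
  moreover have "p 1 + (int n - 1) * d \<le> p n \<and> p n \<le> p 1 + (int n - 1) * K" if "1 \<le> n" for n
    using that
  proof (induction n rule: dec_induct)
    case (step n)
    then show ?case using lower[of n] upper[of n] by (simp add: increment algebra_simps)
  qed simp
  then have "p 1 - d \<le> \<beta> \<and> \<beta> \<le> p 1 - K + int m * (K - d)"
    using \<open>1 \<le> m\<close> by (simp add: \<beta>_def algebra_simps)
  ultimately show ?thesis by blast
qed

section \<open>Ordered partitions of an interval\<close>

locale interval_partition =
  fixes X :: "real set" and N :: nat and Xs :: "nat \<Rightarrow> real set"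
  assumes compact_X: "compact X" and interval_X: "is_interval X" and two_le_N: "2 \<le> N"
    and piece_nonempty: "i \<in> {1..N} \<Longrightarrow> Xs i \<noteq> {}"
    and piece_interval: "i \<in> {1..N} \<Longrightarrow> is_interval (Xs i)"
    and piece_openin: "i \<in> {1..N} \<Longrightarrow> openin (top_of_set X) (Xs i)"
    and pieces_ordered: "i \<in> {1..N} \<Longrightarrow> j \<in> {1..N} \<Longrightarrow> i < j \<Longrightarrow> y \<in> Xs i \<Longrightarrow> z \<in> Xs j \<Longrightarrow> y < z"
    and X_eq_Union_closure: "X = (\<Union>i\<in>{1..N}. closure (Xs i))"
begin

lemma piece_subset: "i \<in> {1..N} \<Longrightarrow> Xs i \<subseteq> X"
  using openin_subset[OF piece_openin] by auto

lemma closed_X: "closed X" and bounded_X: "bounded X"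
  using compact_X compact_imp_closed compact_imp_bounded by auto

text \<open>A one-point piece would be clopen in the connected set X, which has at least two points.\<close>

lemma piece_nontrivial:
  assumes i: "i \<in> {1..N}"
  obtains a b where "a \<in> Xs i" "b \<in> Xs i" "a < b"
proof -
  have "\<exists>a b. a \<in> Xs i \<and> b \<in> Xs i \<and> a < b"
  proof (rule ccontr)
    assume degenerate: "\<not> (\<exists>a b. a \<in> Xs i \<and> b \<in> Xs i \<and> a < b)"
    obtain p where p: "p \<in> Xs i" using piece_nonempty[OF i] by blast
    have "q = p" if "q \<in> Xs i" for q
      using degenerate p that by (meson linorder_neqE_linordered_idom)
    then have singleton: "Xs i = {p}" using p by blast
    have one_two: "1 \<in> {1..N}" "2 \<in> {1..N}" using two_le_N by auto
    obtain a b where a: "a \<in> Xs 1" and b: "b \<in> Xs 2" using piece_nonempty one_two by blast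
    then have "a < b" "a \<in> X" "b \<in> X"
      using pieces_ordered[OF one_two] piece_subset[OF one_two(1)] piece_subset[OF one_two(2)] by auto
    then have "X \<noteq> {p}" by auto
    moreover have "connected X" using interval_X is_interval_connected_1 by auto
    moreover have "openin (top_of_set X) {p}" "closedin (top_of_set X) {p}"
      using piece_openin[OF i] piece_subset[OF i] p singleton by (auto simp: closed_subset)
    ultimately show False unfolding connected_clopen by blast
  qed
  then show thesis using that by blast
qed

lemma bdd_piece: "i \<in> {1..N} \<Longrightarrow> bdd_above (Xs i)" "i \<in> {1..N} \<Longrightarrow> bdd_below (Xs i)"
  using bounded_subset[OF bounded_X piece_subset] bounded_imp_bdd_above bounded_imp_bdd_below
  by auto

lemma closure_piece_bounds:
  assumes i: "i \<in> {1..N}" and y: "y \<in> closure (Xs i)"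
  shows "Inf (Xs i) \<le> y \<and> y \<le> Sup (Xs i)"
proof -
  have "Xs i \<subseteq> {Inf (Xs i)..Sup (Xs i)}"
    using cInf_lower cSup_upper bdd_piece[OF i] by auto
  then have "closure (Xs i) \<subseteq> {Inf (Xs i)..Sup (Xs i)}"
    by (simp add: closure_minimal)
  then show ?thesis using y by auto
qed

lemma Sup_piece_le_Inf_piece:
  assumes "i \<in> {1..N}" "j \<in> {1..N}" "i < j"
  shows "Sup (Xs i) \<le> Inf (Xs j)"
proof -
  have "y \<le> Inf (Xs j)" if "y \<in> Xs i" for y
    using pieces_ordered[OF assms that] piece_nonempty[OF assms(2)] by (simp add: cInf_greatest less_imp_le)
  then show ?thesis using piece_nonempty[OF assms(1)] by (simp add: cSup_least)
qed

lemma Inf_piece_less_Sup_piece: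
  assumes i: "i \<in> {1..N}"
  shows "Inf (Xs i) < Sup (Xs i)"
proof -
  obtain a b where "a \<in> Xs i" "b \<in> Xs i" "a < b" using piece_nontrivial[OF i] .
  then show ?thesis using cInf_lower[of a] cSup_upper[of b] bdd_piece[OF i] by fastforce
qed

lemma Sup_piece_mono: "i \<in> {1..N} \<Longrightarrow> j \<in> {1..N} \<Longrightarrow> i \<le> j \<Longrightarrow> Sup (Xs i) \<le> Sup (Xs j)"
  using Sup_piece_le_Inf_piece[of i j] Inf_piece_less_Sup_piece[of j] by (cases "i = j") auto

lemma Inf_piece_mono: "i \<in> {1..N} \<Longrightarrow> j \<in> {1..N} \<Longrightarrow> i \<le> j \<Longrightarrow> Inf (Xs i) \<le> Inf (Xs j)"
  using Sup_piece_le_Inf_piece[of i j] Inf_piece_less_Sup_piece[of i] by (cases "i = j") auto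

text \<open>Adjacent pieces leave no gap, since a point of a gap would lie in no closure of a piece.\<close>

lemma Sup_piece_eq_Inf_next:
  assumes j: "j \<in> {1..<N}"
  shows "Sup (Xs j) = Inf (Xs (Suc j))"
proof (rule ccontr)
  assume "Sup (Xs j) \<noteq> Inf (Xs (Suc j))"
  have j1: "j \<in> {1..N}" and j2: "Suc j \<in> {1..N}" using j by auto
  then have gap: "Sup (Xs j) < Inf (Xs (Suc j))"
    using Sup_piece_le_Inf_piece[OF j1 j2] \<open>Sup (Xs j) \<noteq> _\<close> by auto
  define m where "m = (Sup (Xs j) + Inf (Xs (Suc j))) / 2"
  obtain a b where a: "a \<in> Xs j" and b: "b \<in> Xs (Suc j)"
    using piece_nonempty j1 j2 by blast
  have "a \<le> m" "m \<le> b"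
    using a b cSup_upper[OF a bdd_piece(1)[OF j1]] cInf_lower[OF b bdd_piece(2)[OF j2]] gap
    by (auto simp: m_def)
  moreover have "a \<in> X" "b \<in> X" using a b piece_subset[OF j1] piece_subset[OF j2] by auto
  ultimately have "m \<in> X" using interval_X unfolding is_interval_1 by blast
  then obtain l where l: "l \<in> {1..N}" "m \<in> closure (Xs l)" using X_eq_Union_closure by blast
  show False
  proof (cases "l \<le> j")
    case True
    then show False
      using closure_piece_bounds[OF l] Sup_piece_mono[OF l(1) j1] gap by (auto simp: m_def)
  next
    case False
    then show False
      using closure_piece_bounds[OF l] Inf_piece_mono[OF j2 l(1)] gap by (auto simp: m_def)
  qed
qed

definition disc_point :: "nat \<Rightarrow> real" where
  "disc_point j = Sup (Xs j)"

lemma disc_point_in_closures: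
  assumes j: "j \<in> {1..<N}"
  shows "disc_point j \<in> closure (Xs j) \<inter> closure (Xs (Suc j))"
proof -
  have j1: "j \<in> {1..N}" and j2: "Suc j \<in> {1..N}" using j by auto
  show ?thesis
    using closure_contains_Sup[OF piece_nonempty[OF j1] bdd_piece(1)[OF j1]]
      closure_contains_Inf[OF piece_nonempty[OF j2] bdd_piece(2)[OF j2]]
    by (simp add: disc_point_def Sup_piece_eq_Inf_next[OF j])
qed

lemma closures_inter_eq_disc_point:
  assumes "j \<in> {1..<N}" "y \<in> closure (Xs j)" "y \<in> closure (Xs (Suc j))"
  shows "y = disc_point j"
proof -
  have "y \<le> Sup (Xs j)" "Inf (Xs (Suc j)) \<le> y"
    using closure_piece_bounds[of j y] closure_piece_bounds[of "Suc j" y] assms by auto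
  then show ?thesis using Sup_piece_eq_Inf_next[OF assms(1)] by (simp add: disc_point_def)
qed

lemma strict_mono_on_disc_point: "strict_mono_on {1..<N} disc_point"
proof (rule strict_mono_onI)
  fix j k assume j: "j \<in> {1..<N}" and k: "k \<in> {1..<N}" and "j < k"
  have "disc_point j = Inf (Xs (Suc j))"
    by (simp add: disc_point_def Sup_piece_eq_Inf_next[OF j])
  also have "\<dots> < Sup (Xs (Suc j))" using j by (intro Inf_piece_less_Sup_piece) auto
  also have "\<dots> \<le> disc_point k"
    unfolding disc_point_def using j k \<open>j < k\<close> by (intro Sup_piece_mono) auto
  finally show "disc_point j < disc_point k" .
qed

lemma disc_set_eq: "disc_set N Xs = disc_point ` {1..<N}"
proof
  show "disc_point ` {1..<N} \<subseteq> disc_set N Xs"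
  proof
    fix z assume "z \<in> disc_point ` {1..<N}"
    then obtain j where j: "j \<in> {1..<N}" and z: "z = disc_point j" by blast
    then have "j \<in> {1..N}" "Suc j \<in> {1..N}" "j \<noteq> Suc j" by auto
    then show "z \<in> disc_set N Xs"
      unfolding disc_set_def z using disc_point_in_closures[OF j] by blast
  qed
next
  show "disc_set N Xs \<subseteq> disc_point ` {1..<N}"
  proof
    fix z assume "z \<in> disc_set N Xs"
    obtain i k where ik: "i \<in> {1..N}" "k \<in> {1..N}" "i < k"
      and z: "z \<in> closure (Xs i)" "z \<in> closure (Xs k)"
    proof -
      obtain i0 k0 where "i0 \<in> {1..N}" "k0 \<in> {1..N}" "i0 \<noteq> k0"
        "z \<in> closure (Xs i0)" "z \<in> closure (Xs k0)"
        using \<open>z \<in> disc_set N Xs\<close> unfolding disc_set_def by blast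
      then show thesis using that[of i0 k0] that[of k0 i0] by (cases "i0 < k0") auto
    qed
    have i: "i \<in> {1..<N}" and k: "k - 1 \<in> {1..<N}" using ik by auto
    have "z \<le> disc_point i"
      using closure_piece_bounds[OF ik(1) z(1)] by (simp add: disc_point_def)
    moreover have "disc_point (k - 1) \<le> z"
      using closure_piece_bounds[OF ik(2) z(2)] Sup_piece_eq_Inf_next[OF k] ik(3)
      by (simp add: disc_point_def)
    moreover have "disc_point i \<le> disc_point (k - 1)"
      using strict_mono_on_leD[OF strict_mono_on_disc_point i k] ik(3) by simp
    ultimately have "z = disc_point i" by auto
    then show "z \<in> disc_point ` {1..<N}" using i by blast
  qed
qed

lemma card_disc_set: "card (disc_set N Xs) = N - 1"
  using disc_set_eq card_image[OF strict_mono_on_imp_inj_on[OF strict_mono_on_disc_point]]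
  by simp

lemma disc_point_between:
  assumes "j \<in> {1..N}" "l \<in> {1..N}" "j \<le> m" "m < l" "y \<in> Xs j" "z \<in> Xs l"
  shows "y \<le> disc_point m \<and> disc_point m \<le> z"
proof -
  have m: "m \<in> {1..<N}" "m \<in> {1..N}" "Suc m \<in> {1..N}" using assms by auto
  have "y \<le> Sup (Xs j)" using cSup_upper[OF assms(5) bdd_piece(1)[OF assms(1)]] .
  also have "\<dots> \<le> disc_point m" using Sup_piece_mono[OF assms(1) m(2) assms(3)] disc_point_def by auto
  finally have "y \<le> disc_point m" .
  moreover have "disc_point m = Inf (Xs (Suc m))"
    by (simp add: disc_point_def Sup_piece_eq_Inf_next[OF m(1)])
  moreover have "Inf (Xs (Suc m)) \<le> Inf (Xs l)" using Inf_piece_mono[OF m(3) assms(2)] assms(4) by auto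
  moreover have "Inf (Xs l) \<le> z" using cInf_lower[OF assms(6) bdd_piece(2)[OF assms(2)]] .
  ultimately show ?thesis by auto
qed

end

section \<open>Atoms of a piecewise contracting map\<close>

lemma foldl_Fmap_mono:
  "A \<subseteq> B \<Longrightarrow> foldl (\<lambda>A i. Fmap Xs f i A) A w \<subseteq> foldl (\<lambda>A i. Fmap Xs f i A) B w"
proof (induction w arbitrary: A B)
  case (Cons i w)
  then have "Fmap Xs f i A \<subseteq> Fmap Xs f i B"
    unfolding Fmap_def by (intro closure_mono image_mono Int_mono) auto
  then show ?case using Cons.IH by simp
qed simp

lemma atom_Nil [simp]: "atom X Xs f [] = X"
  by (simp add: atom_def)

lemma atom_snoc: "atom X Xs f (w @ [i]) = Fmap Xs f i (atom X Xs f w)"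
  by (simp add: atom_def)

locale pc_map = interval_partition X N Xs
  for X :: "real set" and N :: nat and Xs :: "nat \<Rightarrow> real set" +
  fixes f :: "real \<Rightarrow> real" and fe :: "nat \<Rightarrow> real \<Rightarrow> real" and lam :: real
  assumes maps_into: "f ` X \<subseteq> X"
    and lam_pos: "0 < lam" and lam_less_1: "lam < 1"
    and contraction: "i \<in> {1..N} \<Longrightarrow> y \<in> Xs i \<Longrightarrow> z \<in> Xs i \<Longrightarrow> \<bar>f y - f z\<bar> \<le> lam * \<bar>y - z\<bar>"
    and extension_continuous: "i \<in> {1..N} \<Longrightarrow> continuous_on (closure (Xs i)) (fe i)"
    and extension_eq: "i \<in> {1..N} \<Longrightarrow> y \<in> Xs i \<Longrightarrow> fe i y = f y"
    and extension_inj: "i \<in> {1..N} \<Longrightarrow> inj_on (fe i) (closure (Xs i))"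
    and extension_images_disjoint: "i \<in> {1..N} \<Longrightarrow> j \<in> {1..N} \<Longrightarrow> i \<noteq> j \<Longrightarrow>
      fe i ` closure (Xs i) \<inter> fe j ` closure (Xs j) = {}"
begin

lemma continuous_on_piece: "i \<in> {1..N} \<Longrightarrow> continuous_on (Xs i) f"
  using continuous_on_subset[OF extension_continuous closure_subset] extension_eq
  by (metis continuous_on_cong)

lemma closed_atom: "closed (atom X Xs f w)"
  by (induction w rule: rev_induct) (auto simp: atom_snoc Fmap_def closed_X)

lemma atom_subset: "set w \<subseteq> {1..N} \<Longrightarrow> atom X Xs f w \<subseteq> X"
proof (induction w rule: rev_induct)
  case (snoc i w)
  then have "f ` (atom X Xs f w \<inter> Xs i) \<subseteq> X" using maps_into by auto
  then show ?case by (simp add: atom_snoc Fmap_def closure_minimal closed_X)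
qed simp

lemma is_interval_atom: "set w \<subseteq> {1..N} \<Longrightarrow> is_interval (atom X Xs f w)"
proof (induction w rule: rev_induct)
  case (snoc i w)
  then have i: "i \<in> {1..N}" and "is_interval (atom X Xs f w)" by auto
  then have "connected (atom X Xs f w \<inter> Xs i)"
    using piece_interval[OF i] is_interval_Int is_interval_connected_1 by blast
  moreover have "continuous_on (atom X Xs f w \<inter> Xs i) f"
    using continuous_on_subset[OF continuous_on_piece[OF i]] by blast
  ultimately have "connected (f ` (atom X Xs f w \<inter> Xs i))"
    using connected_continuous_image by blast
  then show ?case
    unfolding atom_snoc Fmap_def is_interval_connected_1 by (rule connected_imp_connected_closure)
qed (simp add: interval_X)

lemma atom_convex:
  "set w \<subseteq> {1..N} \<Longrightarrow> y \<in> atom X Xs f w \<Longrightarrow> z \<in> atom X Xs f w \<Longrightarrow> y \<le> v \<Longrightarrow> v \<le> z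
   \<Longrightarrow> v \<in> atom X Xs f w"
  using is_interval_atom unfolding is_interval_1 by blast

lemma diameter_atom: "set w \<subseteq> {1..N} \<Longrightarrow> diameter (atom X Xs f w) \<le> lam ^ length w * diameter X"
proof (induction w rule: rev_induct)
  case (snoc i w)
  then have i: "i \<in> {1..N}" and w: "set w \<subseteq> {1..N}"
    and IH: "diameter (atom X Xs f w) \<le> lam ^ length w * diameter X" by auto
  let ?S = "atom X Xs f w \<inter> Xs i"
  have bounded: "bounded (atom X Xs f w)" using bounded_subset[OF bounded_X atom_subset[OF w]] .
  have "diameter (f ` ?S) \<le> lam * (lam ^ length w * diameter X)"
  proof (rule diameter_le)
    show "f ` ?S \<noteq> {} \<or> 0 \<le> lam * (lam ^ length w * diameter X)"
      using lam_pos diameter_ge_0[OF bounded_X] by simp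
    fix y z assume "y \<in> f ` ?S" "z \<in> f ` ?S"
    then obtain a b where ab: "a \<in> ?S" "b \<in> ?S" "y = f a" "z = f b" by blast
    have "\<bar>a - b\<bar> \<le> diameter (atom X Xs f w)"
      using diameter_bounded_bound[OF bounded, of a b] ab by (simp add: dist_real_def)
    then have "\<bar>a - b\<bar> \<le> lam ^ length w * diameter X" using IH by linarith
    then have "lam * \<bar>a - b\<bar> \<le> lam * (lam ^ length w * diameter X)"
      using lam_pos by (intro mult_left_mono) auto
    with contraction[OF i, of a b] ab show "norm (y - z) \<le> lam * (lam ^ length w * diameter X)"
      by simp
  qed
  moreover have "bounded (f ` ?S)"
    using maps_into atom_subset[OF w] by (intro bounded_subset[OF bounded_X]) auto
  ultimately show ?case by (simp add: atom_snoc Fmap_def diameter_closure mult.assoc)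
qed simp

lemma Fmap_subset_extension_image:
  assumes i: "i \<in> {1..N}"
  shows "Fmap Xs f i A \<subseteq> fe i ` closure (A \<inter> Xs i)"
proof -
  have "A \<inter> Xs i \<subseteq> X" using piece_subset[OF i] by blast
  then have "compact (closure (A \<inter> Xs i))"
    using bounded_subset[OF bounded_X] compact_closure by blast
  moreover have "closure (A \<inter> Xs i) \<subseteq> closure (Xs i)" by (simp add: closure_mono)
  ultimately have "closed (fe i ` closure (A \<inter> Xs i))"
    using compact_continuous_image continuous_on_subset[OF extension_continuous[OF i]] compact_imp_closed
    by blast
  moreover have "f ` (A \<inter> Xs i) = fe i ` (A \<inter> Xs i)" using extension_eq[OF i] by auto
  then have "f ` (A \<inter> Xs i) \<subseteq> fe i ` closure (A \<inter> Xs i)"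
    using closure_subset by (metis image_mono)
  ultimately show ?thesis unfolding Fmap_def by (simp add: closure_minimal)
qed

text \<open>The separation property makes atoms of one generation coded by different words disjoint:
  a common point has a unique preimage under the injective extensions with disjoint images.\<close>

lemma atoms_disjoint:
  "length v = length w \<Longrightarrow> set v \<subseteq> {1..N} \<Longrightarrow> set w \<subseteq> {1..N}
   \<Longrightarrow> atom X Xs f v \<inter> atom X Xs f w \<noteq> {} \<Longrightarrow> v = w"
proof (induction v arbitrary: w rule: rev_induct)
  case (snoc i v)
  obtain w' j where w: "w = w' @ [j]" using snoc.prems(1) by (cases w rule: rev_exhaust) auto
  have i: "i \<in> {1..N}" and j: "j \<in> {1..N}" and v: "set v \<subseteq> {1..N}" and w': "set w' \<subseteq> {1..N}"
    using snoc.prems w by auto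
  obtain y where "y \<in> Fmap Xs f i (atom X Xs f v)" "y \<in> Fmap Xs f j (atom X Xs f w')"
    using snoc.prems(4) w by (auto simp: atom_snoc)
  then obtain a b where a: "a \<in> closure (atom X Xs f v \<inter> Xs i)" "y = fe i a"
    and b: "b \<in> closure (atom X Xs f w' \<inter> Xs j)" "y = fe j b"
    using Fmap_subset_extension_image[OF i] Fmap_subset_extension_image[OF j] by blast
  have a_cl: "a \<in> closure (Xs i)" "a \<in> atom X Xs f v"
    using a(1) closure_mono[OF Int_lower2] closure_minimal[OF Int_lower1 closed_atom] by blast+
  have b_cl: "b \<in> closure (Xs j)" "b \<in> atom X Xs f w'"
    using b(1) closure_mono[OF Int_lower2] closure_minimal[OF Int_lower1 closed_atom] by blast+
  have "i = j" using extension_images_disjoint[OF i j] a_cl b_cl a b by blast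
  moreover have "a = b" using extension_inj[OF i] a_cl b_cl a b \<open>i = j\<close> by (auto dest: inj_onD)
  ultimately have "v = w'" using snoc.IH[of w'] snoc.prems(1) w v w' a_cl b_cl by auto
  then show ?case using w \<open>i = j\<close> by simp
qed simp

lemma atom_Cons_subset: "i \<in> {1..N} \<Longrightarrow> atom X Xs f (i # w) \<subseteq> atom X Xs f w"
  using foldl_Fmap_mono[OF atom_subset[of "[i]"]] by (simp add: atom_def)

lemma eventually_atoms_narrower_than_pieces:
  "eventually (\<lambda>n. \<forall>k\<in>{1..N}. \<exists>a\<in>Xs k. \<exists>b\<in>Xs k. lam ^ n * diameter X < b - a) sequentially"
proof (rule eventually_ball_finite)
  have "(\<lambda>n. lam ^ n * diameter X) \<longlonglongrightarrow> 0"
    using lam_pos lam_less_1 by (intro tendsto_mult_left_zero LIMSEQ_power_zero) auto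
  show "\<forall>k\<in>{1..N}. eventually (\<lambda>n. \<exists>a\<in>Xs k. \<exists>b\<in>Xs k. lam ^ n * diameter X < b - a) sequentially"
  proof
    fix k assume "k \<in> {1..N}"
    then obtain a b where ab: "a \<in> Xs k" "b \<in> Xs k" "a < b" by (rule piece_nontrivial)
    have "eventually (\<lambda>n. lam ^ n * diameter X < b - a) sequentially"
      using order_tendstoD(2)[OF \<open>_ \<longlonglongrightarrow> 0\<close>, of "b - a"] ab(3) by simp
    then show "eventually (\<lambda>n. \<exists>a\<in>Xs k. \<exists>b\<in>Xs k. lam ^ n * diameter X < b - a) sequentially"
      by (rule eventually_mono) (use ab in blast)
  qed
qed simp

end

lemma pc_map_if_separating_pc_interval_map:
  assumes "pc_interval_map X N Xs f fe" and "separation_property N Xs fe"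
  obtains lam where "pc_map X N Xs f fe lam"
proof -
  obtain lam where map: "compact X" "is_interval X" "2 \<le> N"
    "\<forall>i\<in>{1..N}. Xs i \<noteq> {} \<and> is_interval (Xs i) \<and> openin (top_of_set X) (Xs i)"
    "\<forall>i\<in>{1..N}. \<forall>j\<in>{1..N}. i < j \<longrightarrow> (\<forall>y\<in>Xs i. \<forall>z\<in>Xs j. y < z)"
    "X = (\<Union>i\<in>{1..N}. closure (Xs i))" "f ` X \<subseteq> X" "0 < lam" "lam < 1"
    "\<forall>i\<in>{1..N}. \<forall>y\<in>Xs i. \<forall>z\<in>Xs i. \<bar>f y - f z\<bar> \<le> lam * \<bar>y - z\<bar>"
    "\<forall>i\<in>{1..N}. continuous_on (closure (Xs i)) (fe i) \<and> (\<forall>y\<in>Xs i. fe i y = f y)"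
    using assms(1) unfolding pc_interval_map_def by (elim conjE exE) (rule that, assumption+)
  have sep: "\<forall>i\<in>{1..N}. inj_on (fe i) (closure (Xs i))"
    "\<forall>i\<in>{1..N}. \<forall>j\<in>{1..N}. i \<noteq> j \<longrightarrow> fe i ` closure (Xs i) \<inter> fe j ` closure (Xs j) = {}"
    using assms(2) unfolding separation_property_def by blast+
  have "pc_map X N Xs f fe lam"
  proof unfold_locales
    show "compact X" "is_interval X" "2 \<le> N" "X = (\<Union>i\<in>{1..N}. closure (Xs i))" "f ` X \<subseteq> X"
      "0 < lam" "lam < 1"
      by (fact map)+
  next
    fix i j :: nat and y z :: real
    assume i: "i \<in> {1..N}"
    show "Xs i \<noteq> {}" "is_interval (Xs i)" "openin (top_of_set X) (Xs i)"
      "continuous_on (closure (Xs i)) (fe i)" "inj_on (fe i) (closure (Xs i))"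
      using map(4,11) sep(1) i by auto
    show "y < z" if "j \<in> {1..N}" "i < j" "y \<in> Xs i" "z \<in> Xs j" using map(5) i that by blast
    show "\<bar>f y - f z\<bar> \<le> lam * \<bar>y - z\<bar>" if "y \<in> Xs i" "z \<in> Xs i" using map(10) i that by blast
    show "fe i y = f y" if "y \<in> Xs i" using map(11) i that by blast
    show "fe i ` closure (Xs i) \<inter> fe j ` closure (Xs j) = {}" if "j \<in> {1..N}" "i \<noteq> j"
      using sep(2) i that by blast
  qed
  then show thesis by (rule that)
qed

section \<open>Itineraries and their complexity\<close>

locale pc_orbit = pc_map X N Xs f fe lam for X N Xs f fe lam +
  fixes x :: real and \<theta> :: "nat \<Rightarrow> nat"
  assumes itinerary: "is_itinerary N Xs f x \<theta>"
begin

lemma itinerary_range: "\<theta> t \<in> {1..N}"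
  and itinerary_iff: "i \<in> {1..N} \<Longrightarrow> \<theta> t = i \<longleftrightarrow> (f ^^ t) x \<in> Xs i"
  using itinerary unfolding is_itinerary_def by blast+

lemma orbit_in_piece: "(f ^^ t) x \<in> Xs (\<theta> t)"
  using itinerary_iff[OF itinerary_range] by blast

definition factor :: "nat \<Rightarrow> nat \<Rightarrow> nat list" where
  "factor t n = map (\<lambda>k. \<theta> (t + k)) [0..<n]"

lemma lang_eq_range_factor: "lang \<theta> n = range (\<lambda>t. factor t n)"
  by (auto simp: lang_def factor_def)

lemma length_factor [simp]: "length (factor t n) = n"
  by (simp add: factor_def)

lemma set_factor: "set (factor t n) \<subseteq> {1..N}"
  using itinerary_range by (auto simp: factor_def)

lemma factor_Suc: "factor t (Suc n) = factor t n @ [\<theta> (t + n)]"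
  by (simp add: factor_def)

lemma factor_Suc_Cons: "factor t (Suc n) = \<theta> t # factor (Suc t) n"
  by (rule nth_equalityI) (auto simp: factor_def nth_Cons simp del: upt_Suc split: nat.split)

lemma orbit_in_atom: "(f ^^ (t + n)) x \<in> atom X Xs f (factor t n)"
proof (induction n)
  case 0
  show ?case using orbit_in_piece piece_subset[OF itinerary_range] by (auto simp: factor_def)
next
  case (Suc n)
  then have "(f ^^ (t + n)) x \<in> atom X Xs f (factor t n) \<inter> Xs (\<theta> (t + n))"
    using orbit_in_piece by blast
  then show ?case
    by (auto simp: factor_Suc atom_snoc Fmap_def intro!: closure_subset[THEN subsetD])
qed

lemma factor_eq_if_orbit_in_atom: "(f ^^ (s + n)) x \<in> atom X Xs f (factor t n) \<Longrightarrow> factor s n = factor t n"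
  using atoms_disjoint[of "factor s n" "factor t n"] orbit_in_atom[of s n] set_factor by auto

lemma finite_lang: "finite (lang \<theta> n)"
proof -
  have "lang \<theta> n \<subseteq> {w. set w \<subseteq> {1..N} \<and> length w = n}"
    using set_factor by (auto simp: lang_eq_range_factor)
  then show ?thesis using finite_lists_length_eq[of "{1..N}" n] finite_subset by blast
qed

lemma word_in_lang: "u \<in> lang \<theta> n \<Longrightarrow> set u \<subseteq> {1..N} \<and> length u = n"
  using set_factor by (auto simp: lang_eq_range_factor)

definition extensions :: "nat \<Rightarrow> nat list \<Rightarrow> nat set" where
  "extensions n u = {\<theta> (t + n) | t. factor t n = u}"

lemma extensions_subset: "extensions n u \<subseteq> {1..N}"
  using itinerary_range by (auto simp: extensions_def)

lemma finite_extensions: "finite (extensions n u)"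
  using extensions_subset finite_subset by blast

lemma extensions_nonempty: "u \<in> lang \<theta> n \<Longrightarrow> extensions n u \<noteq> {}"
  by (auto simp: lang_eq_range_factor extensions_def)

lemma Max_extensions: "u \<in> lang \<theta> n \<Longrightarrow> Max (extensions n u) \<in> extensions n u"
  using finite_extensions extensions_nonempty by simp

lemma extension_visited: "i \<in> extensions n u \<Longrightarrow> \<exists>t. (f ^^ (t + n)) x \<in> Xs i \<inter> atom X Xs f u"
  unfolding extensions_def using orbit_in_piece orbit_in_atom by blast

lemma lang_Suc: "lang \<theta> (Suc n) = (\<Union>u\<in>lang \<theta> n. (\<lambda>i. u @ [i]) ` extensions n u)"
proof (intro equalityI subsetI)
  fix v assume "v \<in> lang \<theta> (Suc n)"
  then obtain t where "v = factor t (Suc n)" by (auto simp: lang_eq_range_factor)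
  then show "v \<in> (\<Union>u\<in>lang \<theta> n. (\<lambda>i. u @ [i]) ` extensions n u)"
    by (auto simp: lang_eq_range_factor extensions_def factor_Suc)
next
  fix v assume "v \<in> (\<Union>u\<in>lang \<theta> n. (\<lambda>i. u @ [i]) ` extensions n u)"
  then obtain t where "v = factor t n @ [\<theta> (t + n)]" by (auto simp: extensions_def)
  then show "v \<in> lang \<theta> (Suc n)" by (simp add: lang_eq_range_factor factor_Suc)
qed

lemma card_lang_Suc_sum: "card (lang \<theta> (Suc n)) = (\<Sum>u\<in>lang \<theta> n. card (extensions n u))"
proof -
  have "card (lang \<theta> (Suc n)) = (\<Sum>u\<in>lang \<theta> n. card ((\<lambda>i. u @ [i]) ` extensions n u))"
    unfolding lang_Suc by (rule card_UN_disjoint) (auto simp: finite_lang finite_extensions)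
  also have "\<dots> = (\<Sum>u\<in>lang \<theta> n. card (extensions n u))"
    by (rule sum.cong) (auto intro!: card_image inj_onI)
  finally show ?thesis .
qed

lemma disc_point_in_atom_below_Max_extension:
  assumes u: "u \<in> lang \<theta> n" and j: "j \<in> extensions n u" and less: "j < Max (extensions n u)"
  shows "j \<in> {1..<N} \<and> disc_point j \<in> atom X Xs f u"
proof -
  let ?M = "Max (extensions n u)"
  have j1: "j \<in> {1..N}" and M1: "?M \<in> {1..N}"
    using extensions_subset[of n u] j Max_extensions[OF u] by auto
  obtain t where t: "(f ^^ (t + n)) x \<in> Xs j \<inter> atom X Xs f u"
    using extension_visited[OF j] by blast
  obtain t' where t': "(f ^^ (t' + n)) x \<in> Xs ?M \<inter> atom X Xs f u"
    using extension_visited[OF Max_extensions[OF u]] by blast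
  have "(f ^^ (t + n)) x \<le> disc_point j" "disc_point j \<le> (f ^^ (t' + n)) x"
    using disc_point_between[OF j1 M1 order_refl less] t t' by auto
  then show ?thesis
    using atom_convex[of u] word_in_lang[OF u] t t' j1 M1 less by auto
qed

definition atom_disc_indices :: "nat list \<Rightarrow> nat set" where
  "atom_disc_indices u = {j \<in> {1..<N}. disc_point j \<in> atom X Xs f u}"

lemma atom_disc_indices_disjoint:
  "u \<in> lang \<theta> n \<Longrightarrow> v \<in> lang \<theta> n \<Longrightarrow> u \<noteq> v \<Longrightarrow> atom_disc_indices u \<inter> atom_disc_indices v = {}"
  using atoms_disjoint[of u v] word_in_lang unfolding atom_disc_indices_def by auto

definition growth :: "nat \<Rightarrow> nat" where
  "growth n = (\<Sum>u\<in>lang \<theta> n. card (extensions n u) - 1)"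

lemma card_extensions_minus_Max:
  "u \<in> lang \<theta> n \<Longrightarrow> card (extensions n u - {Max (extensions n u)}) = card (extensions n u) - 1"
  by (simp add: card_Diff_singleton Max_extensions)

lemma card_lang_Suc: "card (lang \<theta> (Suc n)) = card (lang \<theta> n) + growth n"
proof -
  have "card (extensions n u) = (card (extensions n u) - 1) + 1" if "u \<in> lang \<theta> n" for u
    using extensions_nonempty[OF that] finite_extensions by (simp add: Suc_leI card_gt_0_iff)
  then have "card (lang \<theta> (Suc n)) = (\<Sum>u\<in>lang \<theta> n. (card (extensions n u) - 1) + 1)"
    unfolding card_lang_Suc_sum by (rule sum.cong[OF refl])
  then show ?thesis by (simp only: sum.distrib) (simp add: growth_def)
qed

text \<open>Below the largest extension of a word, every extension marks a discontinuity inside the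
  atom of the word, and such discontinuities are not shared between the pairwise disjoint atoms.\<close>

lemma growth_le: "growth n \<le> N - 1"
proof -
  have "growth n \<le> (\<Sum>u\<in>lang \<theta> n. card (atom_disc_indices u))"
    unfolding growth_def
  proof (rule sum_mono)
    fix u assume u: "u \<in> lang \<theta> n"
    have "extensions n u - {Max (extensions n u)} \<subseteq> atom_disc_indices u"
      using disc_point_in_atom_below_Max_extension[OF u] finite_extensions
      by (auto simp: atom_disc_indices_def order_le_neq_trans)
    then have "card (extensions n u - {Max (extensions n u)}) \<le> card (atom_disc_indices u)"
      by (rule card_mono[rotated]) (simp add: atom_disc_indices_def)
    then show "card (extensions n u) - 1 \<le> card (atom_disc_indices u)"
      using card_extensions_minus_Max[OF u] by simp
  qed
  also have "\<dots> = card (\<Union>u\<in>lang \<theta> n. atom_disc_indices u)"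
    using atom_disc_indices_disjoint finite_lang
    by (intro card_UN_disjoint[symmetric]) (auto simp: atom_disc_indices_def)
  also have "\<dots> \<le> card {1..<N}"
    by (rule card_mono) (auto simp: atom_disc_indices_def)
  finally show ?thesis by simp
qed

definition lr_indices :: "nat \<Rightarrow> nat list \<Rightarrow> nat set" where
  "lr_indices n u = {j \<in> {1..<N}. j \<in> extensions n u \<and> Suc j \<in> extensions n u \<and> disc_point j \<in> atom X Xs f u}"

lemma atoms_of_eq_atom_factor:
  assumes "A \<in> atoms_of X N Xs f n x" and "(f ^^ (t + n)) x \<in> A"
  shows "A = atom X Xs f (factor t n)"
proof -
  obtain w where w: "A = atom X Xs f w" "length w = n" "set w \<subseteq> {1..N}"
    using assms(1) unfolding atoms_of_def atoms_def by blast
  then have "factor t n = w"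
    using atoms_disjoint[of "factor t n" w] orbit_in_atom[of t n] set_factor assms(2) by auto
  then show ?thesis using w by simp
qed

lemma atom_factor_in_atoms_of: "atom X Xs f (factor t n) \<in> atoms_of X N Xs f n x"
  using orbit_in_atom[of t n] set_factor[of t n] unfolding atoms_of_def atoms_def by auto

lemma Delta_lr_n_eq: "Delta_lr_n X N Xs f n x = disc_point ` (\<Union>u\<in>lang \<theta> n. lr_indices n u)"
proof (intro equalityI subsetI)
  fix z assume "z \<in> Delta_lr_n X N Xs f n x"
  then obtain i A t t' where i: "i \<in> {1..<N}" and z: "z \<in> closure (Xs i)" "z \<in> closure (Xs (Suc i))"
    and A: "A \<in> atoms_of X N Xs f n x" "z \<in> A"
    and t: "(f ^^ (t + n)) x \<in> A \<inter> Xs i" and t': "(f ^^ (t' + n)) x \<in> A \<inter> Xs (Suc i)"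
    unfolding Delta_lr_n_def by auto
  have A_eq: "A = atom X Xs f (factor t n)" using atoms_of_eq_atom_factor A t by blast
  have "factor t' n = factor t n" using factor_eq_if_orbit_in_atom t' A_eq by blast
  moreover have "\<theta> (t + n) = i" "\<theta> (t' + n) = Suc i"
    using itinerary_iff[of i] itinerary_iff[of "Suc i"] i t t' by auto
  ultimately have "i \<in> lr_indices n (factor t n)"
    using i A(2) z closures_inter_eq_disc_point[OF i z] A_eq
    unfolding lr_indices_def extensions_def by (metis (mono_tags, lifting) mem_Collect_eq)
  moreover have "z = disc_point i" using closures_inter_eq_disc_point[OF i z] .
  ultimately show "z \<in> disc_point ` (\<Union>u\<in>lang \<theta> n. lr_indices n u)"
    by (auto simp: lang_eq_range_factor)
next
  fix z assume "z \<in> disc_point ` (\<Union>u\<in>lang \<theta> n. lr_indices n u)"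
  then obtain j u where u: "u \<in> lang \<theta> n" and j: "j \<in> lr_indices n u" and z: "z = disc_point j"
    by blast
  then have j1: "j \<in> {1..<N}" and ext: "j \<in> extensions n u" "Suc j \<in> extensions n u"
    and "disc_point j \<in> atom X Xs f u"
    unfolding lr_indices_def by auto
  moreover obtain t t' where "(f ^^ (t + n)) x \<in> Xs j \<inter> atom X Xs f u"
    "(f ^^ (t' + n)) x \<in> Xs (Suc j) \<inter> atom X Xs f u"
    using extension_visited[OF ext(1)] extension_visited[OF ext(2)] by blast
  moreover have "atom X Xs f u \<in> atoms_of X N Xs f n x"
    using u atom_factor_in_atoms_of by (auto simp: lang_eq_range_factor)
  moreover have "disc_point j \<in> disc_set N Xs" using disc_set_eq j1 by blast
  ultimately show "z \<in> Delta_lr_n X N Xs f n x"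
    unfolding Delta_lr_n_def z using disc_point_in_closures[OF j1] by auto
qed

lemma card_Delta_lr_n: "card (Delta_lr_n X N Xs f n x) = (\<Sum>u\<in>lang \<theta> n. card (lr_indices n u))"
proof -
  have "(\<Union>u\<in>lang \<theta> n. lr_indices n u) \<subseteq> {1..<N}" by (auto simp: lr_indices_def)
  then have "card (Delta_lr_n X N Xs f n x) = card (\<Union>u\<in>lang \<theta> n. lr_indices n u)"
    unfolding Delta_lr_n_eq
    by (intro card_image inj_on_subset[OF strict_mono_on_imp_inj_on[OF strict_mono_on_disc_point]])
  also have "\<dots> = (\<Sum>u\<in>lang \<theta> n. card (lr_indices n u))"
  proof (rule card_UN_disjoint)
    show "\<forall>u\<in>lang \<theta> n. \<forall>v\<in>lang \<theta> n. u \<noteq> v \<longrightarrow> lr_indices n u \<inter> lr_indices n v = {}"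
      using atom_disc_indices_disjoint unfolding atom_disc_indices_def lr_indices_def by blast
  qed (auto simp: finite_lang lr_indices_def)
  finally show ?thesis .
qed

lemma card_Delta_lr_n_le_growth: "card (Delta_lr_n X N Xs f n x) \<le> growth n"
  unfolding card_Delta_lr_n growth_def
proof (rule sum_mono)
  fix u assume u: "u \<in> lang \<theta> n"
  have "lr_indices n u \<subseteq> extensions n u - {Max (extensions n u)}"
  proof
    fix j assume "j \<in> lr_indices n u"
    then have "j \<in> extensions n u" "Suc j \<in> extensions n u" by (auto simp: lr_indices_def)
    then show "j \<in> extensions n u - {Max (extensions n u)}"
      using Max_ge[OF finite_extensions[of n u], of "Suc j"] by auto
  qed
  then have "card (lr_indices n u) \<le> card (extensions n u - {Max (extensions n u)})"
    by (simp add: card_mono finite_extensions)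
  then show "card (lr_indices n u) \<le> card (extensions n u) - 1"
    using card_extensions_minus_Max[OF u] by simp
qed

text \<open>Once atoms are shorter than every piece, the orbit points of one atom cannot jump over a
  piece, so consecutive extensions of a word differ by one.\<close>

lemma extensions_consecutive:
  assumes narrow: "\<forall>k\<in>{1..N}. \<exists>a\<in>Xs k. \<exists>b\<in>Xs k. lam ^ n * diameter X < b - a"
    and u: "u \<in> lang \<theta> n" and i: "i \<in> extensions n u" and l: "l \<in> extensions n u" and "i < l"
  shows "l = Suc i"
proof (rule ccontr)
  assume "l \<noteq> Suc i"
  have i1: "i \<in> {1..N}" and l1: "l \<in> {1..N}" using extensions_subset i l by blast+
  then have k: "Suc i \<in> {1..N}" "i < Suc i" "Suc i < l" using \<open>i < l\<close> \<open>l \<noteq> Suc i\<close> by auto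
  obtain a b where ab: "a \<in> Xs (Suc i)" "b \<in> Xs (Suc i)" "lam ^ n * diameter X < b - a"
    using narrow k(1) by blast
  obtain t t' where t: "(f ^^ (t + n)) x \<in> Xs i \<inter> atom X Xs f u"
    and t': "(f ^^ (t' + n)) x \<in> Xs l \<inter> atom X Xs f u"
    using extension_visited[OF i] extension_visited[OF l] by blast
  have "(f ^^ (t + n)) x < a" "a < (f ^^ (t' + n)) x" "(f ^^ (t + n)) x < b" "b < (f ^^ (t' + n)) x"
    using pieces_ordered[OF i1 k(1) k(2)] pieces_ordered[OF k(1) l1 k(3)] t t' ab by blast+
  then have "a \<in> atom X Xs f u" "b \<in> atom X Xs f u"
    using atom_convex[of u] word_in_lang[OF u] t t' by (meson IntD2 less_imp_le)+
  moreover have "bounded (atom X Xs f u)"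
    using bounded_subset[OF bounded_X atom_subset] word_in_lang[OF u] by blast
  ultimately have "b - a \<le> diameter (atom X Xs f u)"
    using diameter_bounded_bound by (fastforce simp: dist_real_def)
  also have "\<dots> \<le> lam ^ n * diameter X" using diameter_atom word_in_lang[OF u] by metis
  finally show False using ab(3) by linarith
qed

lemma eventually_growth_le_card_Delta_lr_n:
  "eventually (\<lambda>n. growth n \<le> card (Delta_lr_n X N Xs f n x)) sequentially"
  using eventually_atoms_narrower_than_pieces
proof (rule eventually_mono)
  fix n assume narrow: "\<forall>k\<in>{1..N}. \<exists>a\<in>Xs k. \<exists>b\<in>Xs k. lam ^ n * diameter X < b - a"
  show "growth n \<le> card (Delta_lr_n X N Xs f n x)"
    unfolding card_Delta_lr_n growth_def
  proof (rule sum_mono)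
    fix u assume u: "u \<in> lang \<theta> n"
    let ?M = "Max (extensions n u)"
    have "extensions n u - {?M} \<subseteq> lr_indices n u"
    proof
      fix j assume j: "j \<in> extensions n u - {?M}"
      then have "j < ?M" using finite_extensions by (simp add: order_le_neq_trans)
      moreover have "?M = Suc j"
        using extensions_consecutive[OF narrow u _ Max_extensions[OF u]] j \<open>j < ?M\<close> by blast
      ultimately show "j \<in> lr_indices n u"
        using disc_point_in_atom_below_Max_extension[OF u] j Max_extensions[OF u]
        unfolding lr_indices_def by auto
    qed
    then have "card (extensions n u - {?M}) \<le> card (lr_indices n u)"
      by (rule card_mono[rotated]) (simp add: lr_indices_def)
    then show "card (extensions n u) - 1 \<le> card (lr_indices n u)"
      using card_extensions_minus_Max[OF u] by simp
  qed
qed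

lemma Delta_lr_n_Suc_subset: "Delta_lr_n X N Xs f (Suc n) x \<subseteq> Delta_lr_n X N Xs f n x"
proof
  fix z assume "z \<in> Delta_lr_n X N Xs f (Suc n) x"
  then obtain i A t t' where z: "z \<in> disc_set N Xs" "1 \<le> i" "i < N"
    "z \<in> closure (Xs i) \<inter> closure (Xs (Suc i))"
    and A: "A \<in> atoms_of X N Xs f (Suc n) x" "z \<in> A"
    and t: "(f ^^ (t + Suc n)) x \<in> A \<inter> Xs i" and t': "(f ^^ (t' + Suc n)) x \<in> A \<inter> Xs (Suc i)"
    unfolding Delta_lr_n_def by blast
  have "A = atom X Xs f (factor t (Suc n))" using atoms_of_eq_atom_factor A(1) t by blast
  also have "\<dots> \<subseteq> atom X Xs f (factor (Suc t) n)"
    unfolding factor_Suc_Cons by (rule atom_Cons_subset[OF itinerary_range])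
  finally have "(f ^^ (Suc t + n)) x \<in> atom X Xs f (factor (Suc t) n) \<inter> Xs i"
    "(f ^^ (Suc t' + n)) x \<in> atom X Xs f (factor (Suc t) n) \<inter> Xs (Suc i)"
    and "z \<in> atom X Xs f (factor (Suc t) n)"
    using t t' A(2) by auto
  then show "z \<in> Delta_lr_n X N Xs f n x"
    unfolding Delta_lr_n_def using z atom_factor_in_atoms_of by blast
qed

lemma Delta_lr_n_antimono: "m \<le> n \<Longrightarrow> Delta_lr_n X N Xs f n x \<subseteq> Delta_lr_n X N Xs f m x"
  by (induction n rule: dec_induct) (use Delta_lr_n_Suc_subset in blast)+

lemma finite_Delta_lr_n: "finite (Delta_lr_n X N Xs f n x)"
  unfolding Delta_lr_n_eq lr_indices_def using finite_lang by auto

lemma Delta_lr_n_eventually_eq: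
  obtains m where "1 \<le> m" "\<And>n. m \<le> n \<Longrightarrow> Delta_lr_n X N Xs f n x = Delta_lr X N Xs f x"
  using decreasing_finite_sets_stabilize[of 1 "\<lambda>n. Delta_lr_n X N Xs f n x"]
    Delta_lr_n_antimono finite_Delta_lr_n
  unfolding Delta_lr_def by blast

lemma card_Delta_lr_le_growth:
  assumes "1 \<le> n"
  shows "card (Delta_lr X N Xs f x) \<le> growth n"
proof -
  have "Delta_lr X N Xs f x \<subseteq> Delta_lr_n X N Xs f n x"
    using assms unfolding Delta_lr_def by auto
  then show ?thesis
    using card_mono[OF finite_Delta_lr_n] card_Delta_lr_n_le_growth[of n] by (meson le_trans)
qed

lemma growth_eventually_eq_card_Delta_lr:
  obtains m where "1 \<le> m" "\<And>n. m \<le> n \<Longrightarrow> growth n = card (Delta_lr X N Xs f x)"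
proof -
  obtain m1 where "1 \<le> m1" and m1: "\<And>n. m1 \<le> n \<Longrightarrow> Delta_lr_n X N Xs f n x = Delta_lr X N Xs f x"
    using Delta_lr_n_eventually_eq by blast
  obtain m2 where m2: "\<And>n. m2 \<le> n \<Longrightarrow> growth n \<le> card (Delta_lr_n X N Xs f n x)"
    using eventually_growth_le_card_Delta_lr_n unfolding eventually_sequentially by blast
  have "growth n = card (Delta_lr X N Xs f x)" if "max m1 m2 \<le> n" for n
    using m1[of n] m2[of n] card_Delta_lr_n_le_growth[of n] that by (simp add: le_antisym)
  with \<open>1 \<le> m1\<close> show thesis by (intro that[of "max m1 m2"]) auto
qed

end

theorem theorem2:
  fixes X :: "real set" and N :: nat and Xs :: "nat \<Rightarrow> real set"
    and f :: "real \<Rightarrow> real" and fe :: "nat \<Rightarrow> real \<Rightarrow> real"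
    and x :: real and \<theta> :: "nat \<Rightarrow> nat"
  assumes "pc_interval_map X N Xs f fe"
    and "pc_discontinuous X N Xs f"
    and "separation_property N Xs fe"
    and "x \<in> Xtilde X N Xs f"
    and "is_itinerary N Xs f x \<theta>"
  shows "\<exists>m0::nat. m0 \<ge> 1 \<and> (\<exists>\<beta>::int.
           (\<forall>n\<ge>m0. int (complexity \<theta> n) = int n * int (card (Delta_lr X N Xs f x)) + \<beta>) \<and>
           int (complexity \<theta> 1) - int (card (Delta_lr X N Xs f x)) \<le> \<beta> \<and>
           \<beta> \<le> int (complexity \<theta> 1) - int (card (disc_set N Xs))
                + int m0 * (int (card (disc_set N Xs)) - int (card (Delta_lr X N Xs f x))))"
proof -
  obtain lam where "pc_map X N Xs f fe lam"
    using assms(1,3) by (rule pc_map_if_separating_pc_interval_map)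
  then interpret pc_orbit X N Xs f fe lam x \<theta>
    using assms(5) by (simp add: pc_orbit_def pc_orbit_axioms_def)
  obtain m where "1 \<le> m" and stable: "\<And>n. m \<le> n \<Longrightarrow> growth n = card (Delta_lr X N Xs f x)"
    using growth_eventually_eq_card_Delta_lr by blast
  have "\<exists>\<beta>. (\<forall>n\<ge>m. int (complexity \<theta> n) = int n * int (card (Delta_lr X N Xs f x)) + \<beta>) \<and>
      int (complexity \<theta> 1) - int (card (Delta_lr X N Xs f x)) \<le> \<beta> \<and>
      \<beta> \<le> int (complexity \<theta> 1) - int (card (disc_set N Xs))
        + int m * (int (card (disc_set N Xs)) - int (card (Delta_lr X N Xs f x)))"
    using \<open>1 \<le> m\<close> stable card_Delta_lr_le_growth growth_le card_disc_set
    by (intro eventually_affine_of_bounded_increments[where s = "\<lambda>n. int (growth n)"])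
      (auto simp: complexity_def card_lang_Suc)
  with \<open>1 \<le> m\<close> show ?thesis by blast
qed

end
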